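(* A functor $f\colon A\to B$ between small categories is injective on objects if and only if it is isomorphic, in the arrow category $\mathbf{Cat}^{\mathbf{2}}$, to $\Pi(g)$ for some monomorphism $g$ of simplicial sets.
   Context: $\Pi\colon\mathbf{SSet}\to\mathbf{Cat}$ denotes the left adjoint of the nerve functor $N\colon\mathbf{Cat}\to\mathbf{SSet}$ (sending a simplicial set to its fundamental/classifying category). $\mathbf{Cat}^{\mathbf{2}}$ is the category whose objects are functors and whose morphisms are commutative squares. *)

theory Defs
  imports Main
begin

record ('o, 'm) cat =
  cObj  :: "'o set"
  cArr  :: "'m set"
  cDom  :: "'m \<Rightarrow> 'o"
  cCod  :: "'m \<Rightarrow> 'o"
  cId   :: "'o \<Rightarrow> 'm"
  cComp :: "'m \<Rightarrow> 'm \<Rightarrow> 'm"   (* cComp g f = g o f *)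

definition is_category :: "('o, 'm) cat \<Rightarrow> bool" where
  "is_category C \<longleftrightarrow>
     (\<forall>f\<in>cArr C. cDom C f \<in> cObj C \<and> cCod C f \<in> cObj C) \<and>
     (\<forall>x\<in>cObj C. cId C x \<in> cArr C \<and> cDom C (cId C x) = x \<and> cCod C (cId C x) = x) \<and>
     (\<forall>f\<in>cArr C. \<forall>g\<in>cArr C. cDom C g = cCod C f \<longrightarrow>
        cComp C g f \<in> cArr C \<and> cDom C (cComp C g f) = cDom C f \<and> cCod C (cComp C g f) = cCod C g) \<and>
     (\<forall>f\<in>cArr C. cComp C (cId C (cCod C f)) f = f \<and> cComp C f (cId C (cDom C f)) = f) \<and>
     (\<forall>f\<in>cArr C. \<forall>g\<in>cArr C. \<forall>h\<in>cArr C. cDom C g = cCod C f \<and> cDom C h = cCod C g \<longrightarrow>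
        cComp C h (cComp C g f) = cComp C (cComp C h g) f)"

definition is_functor ::
  "('o, 'm) cat \<Rightarrow> ('p, 'n) cat \<Rightarrow> ('o \<Rightarrow> 'p) \<Rightarrow> ('m \<Rightarrow> 'n) \<Rightarrow> bool" where
  "is_functor C D Fo Fm \<longleftrightarrow>
     (\<forall>x\<in>cObj C. Fo x \<in> cObj D) \<and>
     (\<forall>f\<in>cArr C. Fm f \<in> cArr D \<and> cDom D (Fm f) = Fo (cDom C f) \<and> cCod D (Fm f) = Fo (cCod C f)) \<and>
     (\<forall>x\<in>cObj C. Fm (cId C x) = cId D (Fo x)) \<and>
     (\<forall>f\<in>cArr C. \<forall>g\<in>cArr C. cDom C g = cCod C f \<longrightarrow> Fm (cComp C g f) = cComp D (Fm g) (Fm f))"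

definition iso_functor ::
  "('o, 'm) cat \<Rightarrow> ('p, 'n) cat \<Rightarrow> ('o \<Rightarrow> 'p) \<Rightarrow> ('m \<Rightarrow> 'n) \<Rightarrow> bool" where
  "iso_functor C D Fo Fm \<longleftrightarrow> is_functor C D Fo Fm \<and>
     (\<exists>Go Gm. is_functor D C Go Gm \<and>
        (\<forall>x\<in>cObj C. Go (Fo x) = x) \<and> (\<forall>y\<in>cObj D. Fo (Go y) = y) \<and>
        (\<forall>f\<in>cArr C. Gm (Fm f) = f) \<and> (\<forall>g\<in>cArr D. Fm (Gm g) = g))"

definition arrow_iso ::
  "('o1, 'm1) cat \<Rightarrow> ('o2, 'm2) cat \<Rightarrow> ('o1 \<Rightarrow> 'o2) \<Rightarrow> ('m1 \<Rightarrow> 'm2) \<Rightarrow>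
   ('o3, 'm3) cat \<Rightarrow> ('o4, 'm4) cat \<Rightarrow> ('o3 \<Rightarrow> 'o4) \<Rightarrow> ('m3 \<Rightarrow> 'm4) \<Rightarrow> bool" where
  "arrow_iso C D Fo Fm C' D' Go Gm \<longleftrightarrow>
     (\<exists>ao am bo bm. iso_functor C C' ao am \<and> iso_functor D D' bo bm \<and>
        (\<forall>x\<in>cObj C. Go (ao x) = bo (Fo x)) \<and>
        (\<forall>f\<in>cArr C. Gm (am f) = bm (Fm f)))"

text \<open>A morphism [m] -> [n] of the simplex category: a monotone map
  {0..m} -> {0..n} (values outside {0..m} are irrelevant).\<close>
definition dmap :: "nat \<Rightarrow> nat \<Rightarrow> (nat \<Rightarrow> nat) \<Rightarrow> bool" where
  "dmap m n \<theta> \<longleftrightarrow> (\<forall>i\<le>m. \<theta> i \<le> n) \<and> (\<forall>i j. i \<le> j \<and> j \<le> m \<longrightarrow> \<theta> i \<le> \<theta> j)"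

text \<open>A simplicial set: sets of n-simplices, and for every theta : [m] -> [n]
  a map sact m n theta : X_n -> X_m, contravariantly functorial.\<close>
record 'a sset =
  Simp :: "nat \<Rightarrow> 'a set"
  sact :: "nat \<Rightarrow> nat \<Rightarrow> (nat \<Rightarrow> nat) \<Rightarrow> 'a \<Rightarrow> 'a"

definition is_sset :: "'a sset \<Rightarrow> bool" where
  "is_sset X \<longleftrightarrow>
     (\<forall>m n \<theta>. dmap m n \<theta> \<longrightarrow> (\<forall>x\<in>Simp X n. sact X m n \<theta> x \<in> Simp X m)) \<and>
     (\<forall>n. \<forall>x\<in>Simp X n. sact X n n id x = x) \<and>
     (\<forall>k m n \<phi> \<theta>. dmap k m \<phi> \<and> dmap m n \<theta> \<longrightarrow>
        (\<forall>x\<in>Simp X n. sact X k m \<phi> (sact X m n \<theta> x) = sact X k n (\<theta> \<circ> \<phi>) x)) \<and>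
     (\<forall>m n \<theta> \<theta>'. dmap m n \<theta> \<and> dmap m n \<theta>' \<and> (\<forall>i\<le>m. \<theta> i = \<theta>' i) \<longrightarrow>
        (\<forall>x\<in>Simp X n. sact X m n \<theta> x = sact X m n \<theta>' x))"

definition is_smap :: "'a sset \<Rightarrow> 'b sset \<Rightarrow> (nat \<Rightarrow> 'a \<Rightarrow> 'b) \<Rightarrow> bool" where
  "is_smap X Y g \<longleftrightarrow>
     (\<forall>n. \<forall>x\<in>Simp X n. g n x \<in> Simp Y n) \<and>
     (\<forall>m n \<theta>. dmap m n \<theta> \<longrightarrow>
        (\<forall>x\<in>Simp X n. g m (sact X m n \<theta> x) = sact Y m n \<theta> (g n x)))"

definition is_smono :: "'a sset \<Rightarrow> 'b sset \<Rightarrow> (nat \<Rightarrow> 'a \<Rightarrow> 'b) \<Rightarrow> bool" where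
  "is_smono X Y g \<longleftrightarrow> is_smap X Y g \<and> (\<forall>n. inj_on (g n) (Simp X n))"

definition ssrc :: "'a sset \<Rightarrow> 'a \<Rightarrow> 'a" where
  "ssrc X e = sact X 0 1 (\<lambda>_. 0) e"
definition stgt :: "'a sset \<Rightarrow> 'a \<Rightarrow> 'a" where
  "stgt X e = sact X 0 1 (\<lambda>_. 1) e"
definition sdegen0 :: "'a sset \<Rightarrow> 'a \<Rightarrow> 'a" where
  "sdegen0 X x = sact X 1 0 (\<lambda>_. 0) x"
text \<open>Faces of a 2-simplex: d0 (edge 1->2), d1 (edge 0->2), d2 (edge 0->1).\<close>
definition sface0 :: "'a sset \<Rightarrow> 'a \<Rightarrow> 'a" where
  "sface0 X s = sact X 1 2 (\<lambda>j. j + 1) s"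
definition sface1 :: "'a sset \<Rightarrow> 'a \<Rightarrow> 'a" where
  "sface1 X s = sact X 1 2 (\<lambda>j. 2 * j) s"
definition sface2 :: "'a sset \<Rightarrow> 'a \<Rightarrow> 'a" where
  "sface2 X s = sact X 1 2 (\<lambda>j. j) s"

fun schain :: "'a sset \<Rightarrow> 'a \<Rightarrow> 'a list \<Rightarrow> bool" where
  "schain X a [] = True"
| "schain X a (e # es) = (ssrc X e = a \<and> schain X (stgt X e) es)"

fun spath_end :: "'a sset \<Rightarrow> 'a \<Rightarrow> 'a list \<Rightarrow> 'a" where
  "spath_end X a [] = a"
| "spath_end X a (e # es) = spath_end X (stgt X e) es"

definition valid_path :: "'a sset \<Rightarrow> 'a \<times> 'a list \<Rightarrow> bool" where
  "valid_path X p \<longleftrightarrow> fst p \<in> Simp X 0 \<and> set (snd p) \<subseteq> Simp X 1 \<and> schain X (fst p) (snd p)"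

text \<open>The congruence on paths generated by s0 x = id_x and d1 s = d0 s o d2 s.\<close>
inductive pirel :: "'a sset \<Rightarrow> 'a \<times> 'a list \<Rightarrow> 'a \<times> 'a list \<Rightarrow> bool" for X where
  prefl: "valid_path X p \<Longrightarrow> pirel X p p"
| psym: "pirel X p q \<Longrightarrow> pirel X q p"
| ptrans: "pirel X p q \<Longrightarrow> pirel X q r \<Longrightarrow> pirel X p r"
| pid: "x \<in> Simp X 0 \<Longrightarrow> valid_path X (a, us @ [sdegen0 X x] @ vs) \<Longrightarrow>
          pirel X (a, us @ [sdegen0 X x] @ vs) (a, us @ vs)"
| pcomp: "s \<in> Simp X 2 \<Longrightarrow> valid_path X (a, us @ [sface2 X s, sface0 X s] @ vs) \<Longrightarrow>
          pirel X (a, us @ [sface2 X s, sface0 X s] @ vs) (a, us @ [sface1 X s] @ vs)"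

definition pi_class :: "'a sset \<Rightarrow> 'a \<times> 'a list \<Rightarrow> ('a \<times> 'a list) set" where
  "pi_class X p = {q. pirel X p q}"

definition Pi_cat :: "'a sset \<Rightarrow> ('a, ('a \<times> 'a list) set) cat" where
  "Pi_cat X =
     \<lparr> cObj = Simp X 0,
       cArr = {pi_class X p | p. valid_path X p},
       cDom = (\<lambda>c. fst (SOME p. p \<in> c)),
       cCod = (\<lambda>c. let p = (SOME p. p \<in> c) in spath_end X (fst p) (snd p)),
       cId = (\<lambda>x. pi_class X (x, [])),
       cComp = (\<lambda>c d. let p = (SOME p. p \<in> d); q = (SOME q. q \<in> c)
                      in pi_class X (fst p, snd p @ snd q)) \<rparr>"

definition Pi_obj :: "(nat \<Rightarrow> 'a \<Rightarrow> 'b) \<Rightarrow> 'a \<Rightarrow> 'b" where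
  "Pi_obj g = g 0"

definition Pi_arr :: "'b sset \<Rightarrow> (nat \<Rightarrow> 'a \<Rightarrow> 'b) \<Rightarrow> ('a \<times> 'a list) set \<Rightarrow> ('b \<times> 'b list) set" where
  "Pi_arr Y g c = (let p = (SOME p. p \<in> c) in pi_class Y (g 0 (fst p), map (g 1) (snd p)))"

type_synonym ('ao, 'bo, 'am, 'bm) wit = "('ao + 'bo + 'am + 'bm + nat) list"

end

theory Submission
  imports Defs
begin

text \<open>
  On objects \<open>\<Pi>(g)\<close> is \<open>g\<^sub>0\<close>, which is injective when \<open>g\<close> is a monomorphism, and an
  isomorphism in \<open>Cat\<^sup>2\<close> transports injectivity on objects; this gives the converse.

  For the forward direction the nerve is generalised to a labelled nerve: given a set of labels
  mapped onto the arrows of \<open>D\<close>, with a chosen label for each identity, an \<open>n\<close>-simplex is an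
  upper triangular matrix of labels that composes correctly. Its fundamental category is again
  \<open>D\<close>: two edge paths are identified in \<open>\<Pi>\<close> exactly when they have the same start and the same
  composite, because 2-simplices compose adjacent edges and a 2-simplex with a degenerate face
  exchanges one label of an arrow for another. If \<open>f\<close> is injective on objects, let \<open>X\<close> be the
  labelled nerve of \<open>A\<close> with one label per arrow, and \<open>Y\<close> the labelled nerve of \<open>B\<close> whose labels
  are the arrows of \<open>B\<close> together with a copy of each arrow \<open>a\<close> of \<open>A\<close> labelling \<open>f a\<close>. Sending
  identities of \<open>A\<close> to identity labels of \<open>B\<close> and every other arrow to its copy is injective on
  labels precisely because \<open>f\<close> is injective on objects, and it induces a levelwise injective
  simplicial map \<open>g : X \<rightarrow> Y\<close> with \<open>\<Pi>(g)\<close> isomorphic to \<open>f\<close>.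
\<close>

lemma is_categoryD:
  assumes "is_category C"
  shows cat_dom_obj: "f \<in> cArr C \<Longrightarrow> cDom C f \<in> cObj C"
    and cat_cod_obj: "f \<in> cArr C \<Longrightarrow> cCod C f \<in> cObj C"
    and cat_id_arr: "x \<in> cObj C \<Longrightarrow> cId C x \<in> cArr C"
    and cat_dom_id: "x \<in> cObj C \<Longrightarrow> cDom C (cId C x) = x"
    and cat_cod_id: "x \<in> cObj C \<Longrightarrow> cCod C (cId C x) = x"
    and cat_comp_arr: "f \<in> cArr C \<Longrightarrow> g \<in> cArr C \<Longrightarrow> cDom C g = cCod C f \<Longrightarrow> cComp C g f \<in> cArr C"
    and cat_dom_comp: "f \<in> cArr C \<Longrightarrow> g \<in> cArr C \<Longrightarrow> cDom C g = cCod C f \<Longrightarrow> cDom C (cComp C g f) = cDom C f"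
    and cat_cod_comp: "f \<in> cArr C \<Longrightarrow> g \<in> cArr C \<Longrightarrow> cDom C g = cCod C f \<Longrightarrow> cCod C (cComp C g f) = cCod C g"
    and cat_id_left: "f \<in> cArr C \<Longrightarrow> cComp C (cId C (cCod C f)) f = f"
    and cat_id_right: "f \<in> cArr C \<Longrightarrow> cComp C f (cId C (cDom C f)) = f"
    and cat_comp_assoc: "f \<in> cArr C \<Longrightarrow> g \<in> cArr C \<Longrightarrow> h \<in> cArr C \<Longrightarrow>
        cDom C g = cCod C f \<Longrightarrow> cDom C h = cCod C g \<Longrightarrow>
        cComp C h (cComp C g f) = cComp C (cComp C h g) f"
  using assms unfolding is_category_def by blast+

lemma cat_comp_id_id: "is_category C \<Longrightarrow> x \<in> cObj C \<Longrightarrow> cComp C (cId C x) (cId C x) = cId C x"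
  by (metis cat_id_arr cat_cod_id cat_id_left)

lemma is_functorD:
  assumes "is_functor C D Fo Fm"
  shows functor_obj: "x \<in> cObj C \<Longrightarrow> Fo x \<in> cObj D"
    and functor_arr: "f \<in> cArr C \<Longrightarrow> Fm f \<in> cArr D"
    and functor_dom: "f \<in> cArr C \<Longrightarrow> cDom D (Fm f) = Fo (cDom C f)"
    and functor_cod: "f \<in> cArr C \<Longrightarrow> cCod D (Fm f) = Fo (cCod C f)"
    and functor_id: "x \<in> cObj C \<Longrightarrow> Fm (cId C x) = cId D (Fo x)"
    and functor_comp: "f \<in> cArr C \<Longrightarrow> g \<in> cArr C \<Longrightarrow> cDom C g = cCod C f \<Longrightarrow>
        Fm (cComp C g f) = cComp D (Fm g) (Fm f)"
  using assms unfolding is_functor_def by blast+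

lemma iso_functor_if_bij:
  assumes C: "is_category C" and F: "is_functor C D Fo Fm"
    and bij_obj: "bij_betw Fo (cObj C) (cObj D)" and bij_arr: "bij_betw Fm (cArr C) (cArr D)"
  shows "iso_functor C D Fo Fm"
proof -
  define Go where "Go = inv_into (cObj C) Fo"
  define Gm where "Gm = inv_into (cArr C) Fm"
  have Go: "Go y \<in> cObj C" "Fo (Go y) = y" if "y \<in> cObj D" for y
    unfolding Go_def using bij_obj that by (auto simp: bij_betw_def inv_into_into f_inv_into_f)
  have Gm: "Gm g \<in> cArr C" "Fm (Gm g) = g" if "g \<in> cArr D" for g
    unfolding Gm_def using bij_arr that by (auto simp: bij_betw_def inv_into_into f_inv_into_f)
  have Go_Fo: "Go (Fo x) = x" if "x \<in> cObj C" for x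
    unfolding Go_def using bij_obj that bij_betw_inv_into_left by fast
  have Gm_Fm: "Gm (Fm f) = f" if "f \<in> cArr C" for f
    unfolding Gm_def using bij_arr that bij_betw_inv_into_left by fast
  have Gm_dom: "cDom C (Gm g) = Go (cDom D g)" and Gm_cod: "cCod C (Gm g) = Go (cCod D g)"
    if "g \<in> cArr D" for g
    using that Gm Go_Fo functor_dom[OF F] functor_cod[OF F] cat_dom_obj[OF C] cat_cod_obj[OF C] by metis+
  have "is_functor D C Go Gm"
    unfolding is_functor_def
  proof (intro conjI ballI impI)
    fix x assume x: "x \<in> cObj D"
    have "Fm (cId C (Go x)) = cId D x" using functor_id[OF F] Go x by metis
    then show "Gm (cId D x) = cId C (Go x)" using Gm_Fm cat_id_arr[OF C] Go(1)[OF x] by metis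
  next
    fix f g assume f: "f \<in> cArr D" and g: "g \<in> cArr D" and fg: "cDom D g = cCod D f"
    have comp: "cDom C (Gm g) = cCod C (Gm f)" using Gm_dom[OF g] Gm_cod[OF f] fg by simp
    have "Fm (cComp C (Gm g) (Gm f)) = cComp D g f"
      using functor_comp[OF F Gm(1)[OF f] Gm(1)[OF g] comp] Gm f g by simp
    then show "Gm (cComp D g f) = cComp C (Gm g) (Gm f)"
      using Gm_Fm cat_comp_arr[OF C Gm(1)[OF f] Gm(1)[OF g] comp] by metis
  qed (use Go Gm Gm_dom Gm_cod in auto)
  then show ?thesis
    unfolding iso_functor_def using F Go Gm Go_Fo Gm_Fm by blast
qed

lemma schain_append: "schain X a (us @ vs) \<longleftrightarrow> schain X a us \<and> schain X (spath_end X a us) vs"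
  by (induction us arbitrary: a) auto

lemma dmap_faces_degeneracy:
  "dmap 0 1 (\<lambda>_. 0)" "dmap 0 1 (\<lambda>_. 1)" "dmap 1 0 (\<lambda>_. 0)"
  "dmap 1 2 (\<lambda>j. j + 1)" "dmap 1 2 (\<lambda>j. 2 * j)" "dmap 1 2 (\<lambda>j. j)"
  unfolding dmap_def by (auto simp: le_Suc_eq)

section \<open>Labelled nerves\<close>

definition upper_pairs :: "nat \<Rightarrow> (nat \<times> nat) list" where
  "upper_pairs n = concat (map (\<lambda>i. map (Pair i) [i..<Suc n]) [0..<Suc n])"

lemma set_upper_pairs: "set (upper_pairs n) = {(i, j). i \<le> j \<and> j \<le> n}"
proof -
  have "(i, j) \<in> set (upper_pairs n) \<longleftrightarrow> i \<le> j \<and> j \<le> n" for i j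
    unfolding upper_pairs_def by (force simp del: upt_Suc simp: less_Suc_eq_le)
  then show ?thesis by auto
qed

definition upper_entries :: "nat \<Rightarrow> (nat \<Rightarrow> nat \<Rightarrow> 'e) \<Rightarrow> 'e list" where
  "upper_entries n M = map (case_prod M) (upper_pairs n)"

lemma upper_entries_eq_iff:
  "upper_entries n M = upper_entries n M' \<longleftrightarrow> (\<forall>i j. i \<le> j \<and> j \<le> n \<longrightarrow> M i j = M' i j)"
  unfolding upper_entries_def map_eq_conv set_upper_pairs by auto

lemma set_upper_entries: "set (upper_entries n M) = {M i j | i j. i \<le> j \<and> j \<le> n}"
  unfolding upper_entries_def set_map set_upper_pairs by auto

lemma map_upper_entries: "map h (upper_entries n M) = upper_entries n (\<lambda>i j. h (M i j))"
  unfolding upper_entries_def by (simp add: split_def)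

lemma upper_entries_0: "upper_entries 0 M = [M 0 0]"
  and upper_entries_1: "upper_entries 1 M = [M 0 0, M 0 1, M 1 1]"
  and upper_entries_2: "upper_entries 2 M = [M 0 0, M 0 1, M 0 2, M 1 1, M 1 2, M 2 2]"
  by (simp_all add: upper_entries_def upper_pairs_def numeral_2_eq_2)

text \<open>\<open>M i j\<close> is a label of the arrow from vertex \<open>i\<close> to vertex \<open>j\<close> of an \<open>n\<close>-simplex of the nerve of \<open>D\<close>.\<close>

definition nerve_matrix ::
  "('o, 'm) cat \<Rightarrow> 'e set \<Rightarrow> ('e \<Rightarrow> 'm) \<Rightarrow> ('o \<Rightarrow> 'e) \<Rightarrow> nat \<Rightarrow> (nat \<Rightarrow> nat \<Rightarrow> 'e) \<Rightarrow> bool" where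
  "nerve_matrix D E p ie n M \<longleftrightarrow>
     (\<forall>i j. i \<le> j \<and> j \<le> n \<longrightarrow> M i j \<in> E) \<and>
     (\<forall>i\<le>n. \<exists>x\<in>cObj D. M i i = ie x) \<and>
     (\<forall>i j. i \<le> j \<and> j \<le> n \<longrightarrow>
        cDom D (p (M i j)) = cDom D (p (M i i)) \<and> cCod D (p (M i j)) = cDom D (p (M j j))) \<and>
     (\<forall>i j k. i \<le> j \<and> j \<le> k \<and> k \<le> n \<longrightarrow> cComp D (p (M j k)) (p (M i j)) = p (M i k))"

lemma nerve_matrix_reindex:
  assumes "nerve_matrix D E p ie n M" "dmap m n \<theta>"
  shows "nerve_matrix D E p ie m (\<lambda>i j. M (\<theta> i) (\<theta> j))"
  using assms unfolding nerve_matrix_def dmap_def by (meson le_trans order_refl)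

definition labelled_nerve :: "('o, 'm) cat \<Rightarrow> 'e set \<Rightarrow> ('e \<Rightarrow> 'm) \<Rightarrow> ('o \<Rightarrow> 'e) \<Rightarrow> 'e list sset" where
  "labelled_nerve D E p ie =
     \<lparr> Simp = (\<lambda>n. {upper_entries n M | M. nerve_matrix D E p ie n M}),
       sact = (\<lambda>m n \<theta> l. upper_entries m (\<lambda>i j. (SOME M. l = upper_entries n M) (\<theta> i) (\<theta> j))) \<rparr>"

lemma Simp_labelled_nerve:
  "Simp (labelled_nerve D E p ie) n = {upper_entries n M | M. nerve_matrix D E p ie n M}"
  unfolding labelled_nerve_def by simp

lemma sact_labelled_nerve:
  assumes "dmap m n \<theta>"
  shows "sact (labelled_nerve D E p ie) m n \<theta> (upper_entries n M) = upper_entries m (\<lambda>i j. M (\<theta> i) (\<theta> j))"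
proof -
  define M' where "M' = (SOME M'. upper_entries n M = upper_entries n M')"
  have "upper_entries n M = upper_entries n M'"
    unfolding M'_def by (rule someI[where x = M]) (rule refl)
  then have "upper_entries m (\<lambda>i j. M' (\<theta> i) (\<theta> j)) = upper_entries m (\<lambda>i j. M (\<theta> i) (\<theta> j))"
    using assms unfolding upper_entries_eq_iff dmap_def by auto
  then show ?thesis unfolding labelled_nerve_def M'_def by simp
qed

lemma is_sset_labelled_nerve: "is_sset (labelled_nerve D E p ie)"
proof -
  have "dmap n n id" for n unfolding dmap_def by simp
  moreover have "dmap k n (\<theta> \<circ> \<phi>)" if "dmap k m \<phi>" "dmap m n \<theta>" for k m n \<phi> \<theta>
    using that unfolding dmap_def by auto
  moreover have "upper_entries m (\<lambda>i j. M (\<theta> i) (\<theta> j)) = upper_entries m (\<lambda>i j. M (\<theta>' i) (\<theta>' j))"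
    if "\<forall>i\<le>m. \<theta> i = \<theta>' i" for m M and \<theta> \<theta>' :: "nat \<Rightarrow> nat"
    using that unfolding upper_entries_eq_iff by simp
  ultimately show ?thesis
    unfolding is_sset_def Simp_labelled_nerve
    by (auto simp: sact_labelled_nerve intro: nerve_matrix_reindex)
qed

lemma labelled_nerve_faces [simp]:
  "ssrc (labelled_nerve D E p ie) [a, b, c] = [a]"
  "stgt (labelled_nerve D E p ie) [a, b, c] = [c]"
  "sdegen0 (labelled_nerve D E p ie) [a] = [a, a, a]"
  "sface0 (labelled_nerve D E p ie) [a0, a1, a2, a3, a4, a5] = [a3, a4, a5]"
  "sface1 (labelled_nerve D E p ie) [a0, a1, a2, a3, a4, a5] = [a0, a2, a5]"
  "sface2 (labelled_nerve D E p ie) [a0, a1, a2, a3, a4, a5] = [a0, a1, a3]"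
proof -
  define M1 :: "nat \<Rightarrow> nat \<Rightarrow> _" where "M1 i j = (if j = 0 then a else if i = 0 then b else c)" for i j
  define M2 :: "nat \<Rightarrow> nat \<Rightarrow> _" where
    "M2 i j = (if i = 0 then (if j = 0 then a0 else if j = 1 then a1 else a2)
               else if i = 1 then (if j = 1 then a3 else a4) else a5)" for i j
  note faces = dmap_faces_degeneracy[THEN sact_labelled_nerve[where D = D and E = E and p = p and ie = ie]]
  show "ssrc (labelled_nerve D E p ie) [a, b, c] = [a]"
    "stgt (labelled_nerve D E p ie) [a, b, c] = [c]"
    using faces(1,2)[of M1] unfolding ssrc_def stgt_def upper_entries_0 upper_entries_1 M1_def by simp_all
  show "sdegen0 (labelled_nerve D E p ie) [a] = [a, a, a]"
    using faces(3)[of "\<lambda>_ _. a"] unfolding sdegen0_def upper_entries_0 upper_entries_1 by simp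
  show "sface0 (labelled_nerve D E p ie) [a0, a1, a2, a3, a4, a5] = [a3, a4, a5]"
    "sface1 (labelled_nerve D E p ie) [a0, a1, a2, a3, a4, a5] = [a0, a2, a5]"
    "sface2 (labelled_nerve D E p ie) [a0, a1, a2, a3, a4, a5] = [a0, a1, a3]"
    using faces(4-6)[of M2] unfolding sface0_def sface1_def sface2_def upper_entries_1 upper_entries_2 M2_def
    by simp_all
qed

lemma nerve_matrixD:
  assumes "nerve_matrix D E p ie n M"
  shows nerve_matrix_in: "i \<le> j \<Longrightarrow> j \<le> n \<Longrightarrow> M i j \<in> E"
    and nerve_matrix_diag: "i \<le> n \<Longrightarrow> \<exists>x\<in>cObj D. M i i = ie x"
    and nerve_matrix_dom: "i \<le> j \<Longrightarrow> j \<le> n \<Longrightarrow> cDom D (p (M i j)) = cDom D (p (M i i))"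
    and nerve_matrix_cod: "i \<le> j \<Longrightarrow> j \<le> n \<Longrightarrow> cCod D (p (M i j)) = cDom D (p (M j j))"
    and nerve_matrix_comp: "i \<le> j \<Longrightarrow> j \<le> k \<Longrightarrow> k \<le> n \<Longrightarrow> cComp D (p (M j k)) (p (M i j)) = p (M i k)"
  using assms unfolding nerve_matrix_def by blast+

locale arrow_labelling =
  fixes D :: "('o, 'm) cat" and E :: "'e set" and p :: "'e \<Rightarrow> 'm" and ie :: "'o \<Rightarrow> 'e"
  assumes cat: "is_category D"
    and id_label_in: "x \<in> cObj D \<Longrightarrow> ie x \<in> E"
    and label_id: "x \<in> cObj D \<Longrightarrow> p (ie x) = cId D x"
    and label_arr: "e \<in> E \<Longrightarrow> p e \<in> cArr D"
    and label_surj: "a \<in> cArr D \<Longrightarrow> \<exists>e\<in>E. p e = a"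
begin

abbreviation N where "N \<equiv> labelled_nerve D E p ie"

lemma id_label_inj: "x \<in> cObj D \<Longrightarrow> y \<in> cObj D \<Longrightarrow> ie x = ie y \<Longrightarrow> x = y"
  by (metis label_id cat_dom_id[OF cat])

lemma dom_id_label: "x \<in> cObj D \<Longrightarrow> cDom D (p (ie x)) = x"
  and cod_id_label: "x \<in> cObj D \<Longrightarrow> cCod D (p (ie x)) = x"
  by (simp_all add: label_id cat_dom_id[OF cat] cat_cod_id[OF cat])

lemma vertex_iff: "v \<in> Simp N 0 \<longleftrightarrow> (\<exists>x\<in>cObj D. v = [ie x])"
proof
  assume "v \<in> Simp N 0"
  then obtain M where "nerve_matrix D E p ie 0 M" "v = [M 0 0]"
    unfolding Simp_labelled_nerve upper_entries_0 by blast
  then show "\<exists>x\<in>cObj D. v = [ie x]" using nerve_matrix_diag by fastforce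
next
  assume "\<exists>x\<in>cObj D. v = [ie x]"
  then obtain x where x: "x \<in> cObj D" "v = [ie x]" by blast
  then have "nerve_matrix D E p ie 0 (\<lambda>_ _. ie x)"
    unfolding nerve_matrix_def
    using id_label_in label_id cat_comp_id_id[OF cat] dom_id_label cod_id_label by auto
  then show "v \<in> Simp N 0"
    unfolding Simp_labelled_nerve x(2) by (force simp: upper_entries_0)
qed

lemma edge_iff:
  "l \<in> Simp N 1 \<longleftrightarrow>
     (\<exists>x\<in>cObj D. \<exists>y\<in>cObj D. \<exists>e\<in>E. l = [ie x, e, ie y] \<and> cDom D (p e) = x \<and> cCod D (p e) = y)"
proof
  assume "l \<in> Simp N 1"
  then obtain M where M: "nerve_matrix D E p ie 1 M" "l = [M 0 0, M 0 1, M 1 1]"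
    unfolding Simp_labelled_nerve upper_entries_1 by blast
  obtain x y where "x \<in> cObj D" "M 0 0 = ie x" "y \<in> cObj D" "M 1 1 = ie y"
    using nerve_matrix_diag[OF M(1)] by (metis le_numeral_extra(4) zero_le)
  then show "\<exists>x\<in>cObj D. \<exists>y\<in>cObj D. \<exists>e\<in>E. l = [ie x, e, ie y] \<and> cDom D (p e) = x \<and> cCod D (p e) = y"
    using M nerve_matrix_in[OF M(1), of 0 1] nerve_matrix_dom[OF M(1), of 0 1]
      nerve_matrix_cod[OF M(1), of 0 1] dom_id_label by auto
next
  assume "\<exists>x\<in>cObj D. \<exists>y\<in>cObj D. \<exists>e\<in>E. l = [ie x, e, ie y] \<and> cDom D (p e) = x \<and> cCod D (p e) = y"
  then obtain x y e where l: "x \<in> cObj D" "y \<in> cObj D" "e \<in> E" "l = [ie x, e, ie y]"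
    "cDom D (p e) = x" "cCod D (p e) = y" by blast
  define M where "M i j = (if j = 0 then ie x else if i = 0 then e else ie y)" for i j :: nat
  have "nerve_matrix D E p ie 1 M"
    unfolding nerve_matrix_def M_def le_Suc_eq le_zero_eq
    using l id_label_in label_id dom_id_label cod_id_label cat_comp_id_id[OF cat]
      cat_id_left[OF cat label_arr] cat_id_right[OF cat label_arr] by auto
  moreover have "l = upper_entries 1 M" unfolding upper_entries_1 M_def l(4) by simp
  ultimately show "l \<in> Simp N 1" unfolding Simp_labelled_nerve by blast
qed

lemma triangle_iff:
  "s \<in> Simp N 2 \<longleftrightarrow>
     (\<exists>x\<in>cObj D. \<exists>y\<in>cObj D. \<exists>z\<in>cObj D. \<exists>e1\<in>E. \<exists>e2\<in>E. \<exists>e3\<in>E.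
        s = [ie x, e1, e3, ie y, e2, ie z] \<and> cDom D (p e1) = x \<and> cCod D (p e1) = y \<and>
        cDom D (p e2) = y \<and> cCod D (p e2) = z \<and> p e3 = cComp D (p e2) (p e1))"
proof
  assume "s \<in> Simp N 2"
  then obtain M where M: "nerve_matrix D E p ie 2 M" "s = [M 0 0, M 0 1, M 0 2, M 1 1, M 1 2, M 2 2]"
    unfolding Simp_labelled_nerve upper_entries_2 by blast
  obtain x y z where "x \<in> cObj D" "M 0 0 = ie x" "y \<in> cObj D" "M 1 1 = ie y" "z \<in> cObj D" "M 2 2 = ie z"
    using nerve_matrix_diag[OF M(1)] by (metis one_le_numeral order_refl zero_le)
  then show "\<exists>x\<in>cObj D. \<exists>y\<in>cObj D. \<exists>z\<in>cObj D. \<exists>e1\<in>E. \<exists>e2\<in>E. \<exists>e3\<in>E.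
        s = [ie x, e1, e3, ie y, e2, ie z] \<and> cDom D (p e1) = x \<and> cCod D (p e1) = y \<and>
        cDom D (p e2) = y \<and> cCod D (p e2) = z \<and> p e3 = cComp D (p e2) (p e1)"
    using M(2) nerve_matrix_in[OF M(1), of 0 1] nerve_matrix_in[OF M(1), of 1 2]
      nerve_matrix_in[OF M(1), of 0 2] nerve_matrix_dom[OF M(1), of 0 1] nerve_matrix_cod[OF M(1), of 0 1]
      nerve_matrix_dom[OF M(1), of 1 2] nerve_matrix_cod[OF M(1), of 1 2]
      nerve_matrix_comp[OF M(1), of 0 1 2] dom_id_label by auto
next
  assume "\<exists>x\<in>cObj D. \<exists>y\<in>cObj D. \<exists>z\<in>cObj D. \<exists>e1\<in>E. \<exists>e2\<in>E. \<exists>e3\<in>E.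
        s = [ie x, e1, e3, ie y, e2, ie z] \<and> cDom D (p e1) = x \<and> cCod D (p e1) = y \<and>
        cDom D (p e2) = y \<and> cCod D (p e2) = z \<and> p e3 = cComp D (p e2) (p e1)"
  then obtain x y z e1 e2 e3 where s: "x \<in> cObj D" "y \<in> cObj D" "z \<in> cObj D" "e1 \<in> E" "e2 \<in> E" "e3 \<in> E"
    "s = [ie x, e1, e3, ie y, e2, ie z]" "cDom D (p e1) = x" "cCod D (p e1) = y"
    "cDom D (p e2) = y" "cCod D (p e2) = z" "p e3 = cComp D (p e2) (p e1)" by blast
  have e3: "cDom D (p e3) = x" "cCod D (p e3) = z"
    using s cat_dom_comp[OF cat] cat_cod_comp[OF cat] label_arr by auto
  have units: "cComp D (p e1) (cId D x) = p e1" "cComp D (cId D y) (p e1) = p e1"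
    "cComp D (p e2) (cId D y) = p e2" "cComp D (cId D z) (p e2) = p e2"
    "cComp D (p e3) (cId D x) = p e3" "cComp D (cId D z) (p e3) = p e3"
    using s e3 cat_id_left[OF cat label_arr] cat_id_right[OF cat label_arr] by metis+
  define M where
    "M i j = (if i = 0 then (if j = 0 then ie x else if j = 1 then e1 else e3)
              else if i = 1 then (if j = 1 then ie y else e2) else ie z)" for i j :: nat
  have "nerve_matrix D E p ie 2 M"
    unfolding nerve_matrix_def M_def le_Suc_eq le_zero_eq numeral_2_eq_2
    using s(1-12) e3 units id_label_in label_id dom_id_label cod_id_label cat_comp_id_id[OF cat] by auto
  moreover have "s = upper_entries 2 M" unfolding upper_entries_2 M_def s(7) by simp
  ultimately show "s \<in> Simp N 2" unfolding Simp_labelled_nerve by blast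
qed

fun comp_edges :: "'o \<Rightarrow> 'e list list \<Rightarrow> 'm" where
  "comp_edges x [] = cId D x"
| "comp_edges x (l # ls) = cComp D (comp_edges (cCod D (p (l ! 1))) ls) (p (l ! 1))"

text \<open>The start vertex of a path is \<open>[ie x]\<close>; \<open>x\<close> is recovered as the domain of \<open>p (ie x)\<close>.\<close>

definition path_comp :: "'e list \<times> 'e list list \<Rightarrow> 'm" where
  "path_comp q = comp_edges (cDom D (p (hd (fst q)))) (snd q)"

lemma path_comp_Nil: "x \<in> cObj D \<Longrightarrow> path_comp ([ie x], []) = cId D x"
  unfolding path_comp_def by (simp add: dom_id_label)

lemma path_comp_Cons:
  "x \<in> cObj D \<Longrightarrow> y \<in> cObj D \<Longrightarrow> cCod D (p e) = y \<Longrightarrow>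
   path_comp ([ie x], [ie x, e, ie y] # es) = cComp D (path_comp ([ie y], es)) (p e)"
  unfolding path_comp_def by (simp add: dom_id_label)

lemma valid_path_Cons:
  "valid_path N (a, l # es) \<longleftrightarrow>
     (\<exists>x\<in>cObj D. \<exists>y\<in>cObj D. \<exists>e\<in>E. a = [ie x] \<and> l = [ie x, e, ie y] \<and>
        cDom D (p e) = x \<and> cCod D (p e) = y \<and> valid_path N ([ie y], es))"
proof
  assume v: "valid_path N (a, l # es)"
  then have "l \<in> Simp N 1" unfolding valid_path_def by simp
  then obtain x y e where "x \<in> cObj D" "y \<in> cObj D" "e \<in> E" "l = [ie x, e, ie y]"
    "cDom D (p e) = x" "cCod D (p e) = y"
    unfolding edge_iff by blast
  with v show "\<exists>x\<in>cObj D. \<exists>y\<in>cObj D. \<exists>e\<in>E. a = [ie x] \<and> l = [ie x, e, ie y] \<and>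
      cDom D (p e) = x \<and> cCod D (p e) = y \<and> valid_path N ([ie y], es)"
    unfolding valid_path_def vertex_iff by auto
next
  assume "\<exists>x\<in>cObj D. \<exists>y\<in>cObj D. \<exists>e\<in>E. a = [ie x] \<and> l = [ie x, e, ie y] \<and>
      cDom D (p e) = x \<and> cCod D (p e) = y \<and> valid_path N ([ie y], es)"
  then show "valid_path N (a, l # es)"
    unfolding valid_path_def vertex_iff using edge_iff by auto
qed

lemma valid_path_start: "valid_path N (a, es) \<Longrightarrow> \<exists>x\<in>cObj D. a = [ie x]"
  unfolding valid_path_def vertex_iff by simp

lemma valid_path_Cons_start:
  assumes "valid_path N ([ie x], l # es)" "x \<in> cObj D"
  obtains y e where "y \<in> cObj D" "e \<in> E" "l = [ie x, e, ie y]" "cDom D (p e) = x" "cCod D (p e) = y"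
    "valid_path N ([ie y], es)"
  using assms id_label_inj unfolding valid_path_Cons by (metis list.inject)

lemma valid_path_comp:
  "valid_path N ([ie x], es) \<Longrightarrow> x \<in> cObj D \<Longrightarrow>
   path_comp ([ie x], es) \<in> cArr D \<and> cDom D (path_comp ([ie x], es)) = x \<and>
   spath_end N [ie x] es = [ie (cCod D (path_comp ([ie x], es)))]"
proof (induction es arbitrary: x)
  case Nil
  then show ?case using path_comp_Nil cat_id_arr[OF cat] cat_dom_id[OF cat] cat_cod_id[OF cat] by simp
next
  case (Cons l es)
  obtain y e where l: "y \<in> cObj D" "e \<in> E" "l = [ie x, e, ie y]"
    "cDom D (p e) = x" "cCod D (p e) = y" "valid_path N ([ie y], es)"
    using Cons.prems by (rule valid_path_Cons_start)
  have "path_comp ([ie x], l # es) = cComp D (path_comp ([ie y], es)) (p e)"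
    using l Cons.prems(2) path_comp_Cons by simp
  then show ?case
    using l Cons.IH[OF l(6,1)] label_arr[OF l(2)]
      cat_comp_arr[OF cat] cat_dom_comp[OF cat] cat_cod_comp[OF cat] by auto
qed

lemma valid_path_end: "valid_path N (a, es) \<Longrightarrow> spath_end N a es \<in> Simp N 0"
  using valid_path_start valid_path_comp cat_cod_obj[OF cat] vertex_iff by metis

lemma valid_path_append:
  "valid_path N (a, us @ vs) \<longleftrightarrow> valid_path N (a, us) \<and> valid_path N (spath_end N a us, vs)"
  using valid_path_end unfolding valid_path_def by (auto simp: schain_append)

lemma path_comp_append:
  "valid_path N ([ie x], us @ vs) \<Longrightarrow> x \<in> cObj D \<Longrightarrow>
   path_comp ([ie x], us @ vs) = cComp D (path_comp (spath_end N [ie x] us, vs)) (path_comp ([ie x], us))"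
proof (induction us arbitrary: x)
  case Nil
  then have "path_comp ([ie x], vs) \<in> cArr D" "cDom D (path_comp ([ie x], vs)) = x"
    using valid_path_comp by auto
  then show ?case
    using cat_id_right[OF cat, of "path_comp ([ie x], vs)"] by (simp add: path_comp_Nil[OF Nil.prems(2)])
next
  case (Cons l us)
  obtain y e where l: "y \<in> cObj D" "e \<in> E" "l = [ie x, e, ie y]"
    "cDom D (p e) = x" "cCod D (p e) = y" "valid_path N ([ie y], us @ vs)"
    using Cons.prems unfolding append_Cons by (rule valid_path_Cons_start)
  define c where "c = path_comp ([ie y], us)"
  define d where "d = path_comp (spath_end N [ie y] us, vs)"
  have c: "c \<in> cArr D" "cDom D c = y" "spath_end N [ie y] us = [ie (cCod D c)]"
    using valid_path_comp l(1,6) valid_path_append unfolding c_def by blast+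
  have d: "d \<in> cArr D" "cDom D d = cCod D c"
    using valid_path_comp[of "cCod D c" vs] l(6) valid_path_append c(3) cat_cod_obj[OF cat c(1)]
    unfolding d_def by auto
  have "path_comp ([ie x], (l # us) @ vs) = cComp D (cComp D d c) (p e)"
    using l Cons.prems(2) Cons.IH[OF l(6,1)] path_comp_Cons unfolding c_def d_def by simp
  also have "\<dots> = cComp D d (cComp D c (p e))"
    using cat_comp_assoc[OF cat label_arr[OF l(2)] c(1) d(1)] c(2) d(2) l(5) by simp
  also have "\<dots> = cComp D (path_comp (spath_end N [ie x] (l # us), vs)) (path_comp ([ie x], l # us))"
    using l Cons.prems(2) path_comp_Cons unfolding c_def d_def by simp
  finally show ?case .
qed

lemma path_comp_replace_segment:
  assumes v: "valid_path N (a, us @ m @ vs)"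
    and v': "valid_path N (spath_end N a us, m')"
    and end_eq: "spath_end N (spath_end N a us) m' = spath_end N (spath_end N a us) m"
    and comp_eq: "path_comp (spath_end N a us, m') = path_comp (spath_end N a us, m)"
  shows "valid_path N (a, us @ m' @ vs) \<and> path_comp (a, us @ m' @ vs) = path_comp (a, us @ m @ vs)"
proof -
  define b where "b = spath_end N a us"
  have vs: "valid_path N (a, us)" "valid_path N (b, m)" "valid_path N (spath_end N b m, vs)"
    using v valid_path_append unfolding b_def by auto
  have valid': "valid_path N (a, us @ m' @ vs)"
    using vs v' end_eq valid_path_append unfolding b_def by auto
  obtain x where x: "x \<in> cObj D" "a = [ie x]" using valid_path_start[OF v] by blast
  obtain y where y: "y \<in> cObj D" "b = [ie y]" using valid_path_start[OF vs(2)] by blast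
  have "path_comp (a, us @ m' @ vs) =
      cComp D (cComp D (path_comp (spath_end N b m', vs)) (path_comp (b, m'))) (path_comp (a, us))"
    using valid' valid_path_append path_comp_append x y unfolding b_def by metis
  also have "\<dots> = cComp D (cComp D (path_comp (spath_end N b m, vs)) (path_comp (b, m))) (path_comp (a, us))"
    using end_eq comp_eq unfolding b_def by simp
  also have "\<dots> = path_comp (a, us @ m @ vs)"
    using v valid_path_append path_comp_append x y unfolding b_def by metis
  finally show ?thesis using valid' by simp
qed

lemma valid_path_edge:
  assumes "x \<in> cObj D" "y \<in> cObj D" "e \<in> E" "cDom D (p e) = x" "cCod D (p e) = y"
  shows "valid_path N ([ie x], [[ie x, e, ie y]])"
proof -
  have "valid_path N ([ie y], [])" unfolding valid_path_def vertex_iff using assms(2) by auto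
  then show ?thesis unfolding valid_path_Cons using assms by blast
qed

lemma pirel_imp_same_comp:
  "pirel N q r \<Longrightarrow> valid_path N q \<and> valid_path N r \<and> fst q = fst r \<and> path_comp q = path_comp r"
proof (induction rule: pirel.induct)
  case (pid v a us vs)
  obtain x where x: "x \<in> cObj D" "v = [ie x]" using pid.hyps(1) vertex_iff by blast
  have "valid_path N (spath_end N a us, [ie x, ie x, ie x] # vs)"
    using pid.hyps(2) valid_path_append x(2) by simp
  then have b: "spath_end N a us = [ie x]" unfolding valid_path_def by simp
  have "valid_path N (a, us @ [] @ vs) \<and> path_comp (a, us @ [] @ vs) = path_comp (a, us @ [sdegen0 N v] @ vs)"
  proof (rule path_comp_replace_segment)
    show "path_comp (spath_end N a us, []) = path_comp (spath_end N a us, [sdegen0 N v])"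
      using b x path_comp_Nil path_comp_Cons cat_comp_id_id[OF cat] label_id cod_id_label by simp
  qed (use pid.hyps x b in \<open>auto simp: valid_path_def vertex_iff\<close>)
  then show ?case using pid.hyps(2) by simp
next
  case (pcomp s a us vs)
  obtain x y z e1 e2 e3 where s: "x \<in> cObj D" "y \<in> cObj D" "z \<in> cObj D" "e1 \<in> E" "e2 \<in> E" "e3 \<in> E"
    "s = [ie x, e1, e3, ie y, e2, ie z]" "cDom D (p e1) = x" "cCod D (p e1) = y"
    "cDom D (p e2) = y" "cCod D (p e2) = z" "p e3 = cComp D (p e2) (p e1)"
    using pcomp.hyps(1) unfolding triangle_iff by blast
  have e3: "cDom D (p e3) = x" "cCod D (p e3) = z"
    using s cat_dom_comp[OF cat] cat_cod_comp[OF cat] label_arr by auto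
  have "valid_path N (spath_end N a us, [ie x, e1, ie y] # [ie y, e2, ie z] # vs)"
    using pcomp.hyps(2) valid_path_append s(7) by simp
  then have b: "spath_end N a us = [ie x]" unfolding valid_path_def by simp
  have "valid_path N (a, us @ [sface1 N s] @ vs) \<and>
      path_comp (a, us @ [sface1 N s] @ vs) = path_comp (a, us @ [sface2 N s, sface0 N s] @ vs)"
  proof (rule path_comp_replace_segment)
    show "valid_path N (spath_end N a us, [sface1 N s])"
      unfolding b s(7) using valid_path_edge s e3 by simp
    have "cComp D (cId D z) (p e2) = p e2" "cComp D (cId D z) (p e3) = p e3"
      using s(5,6,11) e3(2) cat_id_left[OF cat label_arr] by metis+
    then show "path_comp (spath_end N a us, [sface1 N s]) = path_comp (spath_end N a us, [sface2 N s, sface0 N s])"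
      unfolding b s(7) using s(1-11) path_comp_Nil path_comp_Cons e3 by (simp add: s(12))
  qed (use pcomp.hyps b s in simp_all)
  then show ?case using pcomp.hyps(2) by simp
qed (auto intro: valid_path_start)

definition canon_label :: "'m \<Rightarrow> 'e" where
  "canon_label a = (SOME e. e \<in> E \<and> p e = a)"

definition canon_edge :: "'m \<Rightarrow> 'e list" where
  "canon_edge a = [ie (cDom D a), canon_label a, ie (cCod D a)]"

lemma canon_label: "a \<in> cArr D \<Longrightarrow> canon_label a \<in> E \<and> p (canon_label a) = a"
  unfolding canon_label_def using label_surj by (rule someI2_bex)

lemma canon_path:
  assumes "a \<in> cArr D"
  shows "valid_path N ([ie (cDom D a)], [canon_edge a])" "path_comp ([ie (cDom D a)], [canon_edge a]) = a"
  using valid_path_edge path_comp_Cons path_comp_Nil canon_label[OF assms]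
    cat_dom_obj[OF cat assms] cat_cod_obj[OF cat assms] cat_id_left[OF cat assms]
  unfolding canon_edge_def by simp_all

lemma pirel_compose_edges:
  assumes v: "valid_path N (a, l1 # l2 # vs)"
  shows "pirel N (a, l1 # l2 # vs) (a, canon_edge (path_comp (a, [l1, l2])) # vs)"
proof -
  obtain x where x: "x \<in> cObj D" "a = [ie x]" using valid_path_start[OF v] by blast
  obtain y e1 where l1: "y \<in> cObj D" "e1 \<in> E" "l1 = [ie x, e1, ie y]"
    "cDom D (p e1) = x" "cCod D (p e1) = y" "valid_path N ([ie y], l2 # vs)"
    using v x valid_path_Cons_start by metis
  obtain z e2 where l2: "z \<in> cObj D" "e2 \<in> E" "l2 = [ie y, e2, ie z]"
    "cDom D (p e2) = y" "cCod D (p e2) = z"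
    using l1(1,6) valid_path_Cons_start by metis
  define c where "c = cComp D (p e2) (p e1)"
  have c: "c \<in> cArr D" "cDom D c = x" "cCod D c = z"
    unfolding c_def using l1 l2 label_arr cat_comp_arr[OF cat] cat_dom_comp[OF cat] cat_cod_comp[OF cat]
    by auto
  have "cComp D (cId D z) (p e2) = p e2"
    using cat_id_left[OF cat label_arr[OF l2(2)]] l2(5) by simp
  then have comp: "path_comp (a, [l1, l2]) = c"
    unfolding c_def x(2) l1(3) l2(3) using x(1) l1 l2 path_comp_Cons path_comp_Nil by simp
  define s where "s = [ie x, e1, canon_label c, ie y, e2, ie z]"
  have "s \<in> Simp N 2"
    unfolding s_def triangle_iff using x(1) l1 l2 canon_label[OF c(1)] c_def by blast
  then have "pirel N (a, [] @ [sface2 N s, sface0 N s] @ vs) (a, [] @ [sface1 N s] @ vs)"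
    by (rule pirel.pcomp) (use v l1(3) l2(3) in \<open>simp add: s_def\<close>)
  then show ?thesis unfolding comp canon_edge_def using c l1(3) l2(3) by (simp add: s_def)
qed

lemma pirel_canon_path_Cons_Cons:
  "valid_path N (a, l1 # l2 # vs) \<Longrightarrow>
   pirel N (a, l1 # l2 # vs) (a, [canon_edge (path_comp (a, l1 # l2 # vs))])"
proof (induction vs arbitrary: l1 l2)
  case Nil
  then show ?case using pirel_compose_edges by fastforce
next
  case (Cons l3 vs)
  define c where "c = canon_edge (path_comp (a, [l1, l2]))"
  have step: "pirel N (a, l1 # l2 # l3 # vs) (a, c # l3 # vs)"
    unfolding c_def using pirel_compose_edges[OF Cons.prems] .
  then have "valid_path N (a, c # l3 # vs)" "path_comp (a, c # l3 # vs) = path_comp (a, l1 # l2 # l3 # vs)"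
    using pirel_imp_same_comp by auto
  then show ?case using pirel.ptrans[OF step Cons.IH] by simp
qed

text \<open>Prepending two degenerate edges reduces an arbitrary path to one with at least two edges.\<close>

lemma pirel_canon_path:
  assumes v: "valid_path N (a, es)"
  shows "pirel N (a, es) (a, [canon_edge (path_comp (a, es))])"
proof -
  obtain x where x: "x \<in> cObj D" "a = [ie x]" using valid_path_start[OF v] by blast
  define d where "d = [ie x, ie x, ie x]"
  have d: "sdegen0 N a = d" unfolding d_def x(2) by simp
  have vd: "valid_path N (a, d # es)" "valid_path N (a, d # d # es)"
    using v x id_label_in dom_id_label cod_id_label unfolding d_def valid_path_Cons by auto
  have a: "a \<in> Simp N 0" using v unfolding valid_path_def by simp
  have "pirel N (a, [] @ [sdegen0 N a] @ d # es) (a, [] @ d # es)"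
    by (rule pirel.pid[OF a]) (use vd d in simp)
  moreover have "pirel N (a, [] @ [sdegen0 N a] @ es) (a, [] @ es)"
    by (rule pirel.pid[OF a]) (use vd d in simp)
  ultimately have pad: "pirel N (a, es) (a, d # d # es)"
    using d pirel.psym pirel.ptrans by (metis append_Cons append_Nil)
  then have "path_comp (a, d # d # es) = path_comp (a, es)"
    using pirel_imp_same_comp by simp
  then show ?thesis
    using pirel.ptrans[OF pad pirel_canon_path_Cons_Cons[OF vd(2)]] by simp
qed

theorem pirel_iff_same_comp:
  "pirel N q r \<longleftrightarrow> valid_path N q \<and> valid_path N r \<and> fst q = fst r \<and> path_comp q = path_comp r"
proof
  assume "valid_path N q \<and> valid_path N r \<and> fst q = fst r \<and> path_comp q = path_comp r"
  then show "pirel N q r"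
    using pirel_canon_path[of "fst q" "snd q"] pirel_canon_path[of "fst r" "snd r"]
    by (metis pirel.psym pirel.ptrans prod.collapse)
qed (rule pirel_imp_same_comp)

subsection \<open>The fundamental category of a labelled nerve\<close>

lemma pi_class_valid:
  "valid_path N q \<Longrightarrow>
   pi_class N q = {r. valid_path N r \<and> fst r = fst q \<and> path_comp r = path_comp q}"
  unfolding pi_class_def pirel_iff_same_comp by auto

lemma some_pi_class:
  assumes "valid_path N q"
  defines "r \<equiv> SOME r. r \<in> pi_class N q"
  shows "valid_path N r" "fst r = fst q" "path_comp r = path_comp q"
proof -
  have "q \<in> pi_class N q" using pi_class_valid[OF assms(1)] assms(1) by simp
  then have "r \<in> pi_class N q" unfolding r_def by (rule someI)
  then show "valid_path N r" "fst r = fst q" "path_comp r = path_comp q"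
    using pi_class_valid[OF assms(1)] by auto
qed

lemma spath_end_path_comp:
  "valid_path N q \<Longrightarrow> spath_end N (fst q) (snd q) = [ie (cCod D (path_comp q))]"
  using valid_path_start valid_path_comp by (metis prod.collapse)

lemma Pi_cat_dom: "valid_path N q \<Longrightarrow> cDom (Pi_cat N) (pi_class N q) = fst q"
  unfolding Pi_cat_def using some_pi_class by simp

lemma Pi_cat_cod:
  assumes "valid_path N q"
  shows "cCod (Pi_cat N) (pi_class N q) = spath_end N (fst q) (snd q)"
  unfolding Pi_cat_def Let_def
  using some_pi_class[OF assms] spath_end_path_comp[OF some_pi_class(1)[OF assms]]
    spath_end_path_comp[OF assms] by simp

lemma Pi_cat_comp:
  assumes q: "valid_path N (a, us)" and r: "valid_path N (spath_end N a us, vs)"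
  shows "cComp (Pi_cat N) (pi_class N (spath_end N a us, vs)) (pi_class N (a, us)) = pi_class N (a, us @ vs)"
proof -
  obtain a' us' where q': "(SOME t. t \<in> pi_class N (a, us)) = (a', us')" by fastforce
  obtain b' vs' where r': "(SOME t. t \<in> pi_class N (spath_end N a us, vs)) = (b', vs')" by fastforce
  have q'_props: "valid_path N (a', us')" "a' = a" "path_comp (a', us') = path_comp (a, us)"
    using some_pi_class[OF q] unfolding q' by simp_all
  have r'_props: "valid_path N (b', vs')" "b' = spath_end N a us" "path_comp (b', vs') = path_comp (spath_end N a us, vs)"
    using some_pi_class[OF r] unfolding r' by simp_all
  have ends: "spath_end N a us' = spath_end N a us"
    using q'_props spath_end_path_comp[OF q'_props(1)] spath_end_path_comp[OF q] by simp
  have valid: "valid_path N (a, us @ vs)" "valid_path N (a, us' @ vs')"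
    using q r q'_props r'_props ends valid_path_append by simp_all
  obtain x where x: "x \<in> cObj D" "a = [ie x]" using valid_path_start q by blast
  have "path_comp (a, us' @ vs') = path_comp (a, us @ vs)"
    using path_comp_append valid x q'_props r'_props ends by metis
  then have "pi_class N (a, us' @ vs') = pi_class N (a, us @ vs)"
    using valid pi_class_valid by simp
  then show ?thesis unfolding Pi_cat_def Let_def using q'_props r'_props by (simp add: q' r')
qed

definition nerve_arr :: "'m \<Rightarrow> ('e list \<times> 'e list list) set" where
  "nerve_arr a = pi_class N ([ie (cDom D a)], [canon_edge a])"

lemma pi_class_eq_nerve_arr:
  assumes q: "valid_path N (a, es)"
  shows "path_comp (a, es) \<in> cArr D" "pi_class N (a, es) = nerve_arr (path_comp (a, es))"
proof -
  obtain x where x: "x \<in> cObj D" "a = [ie x]" using valid_path_start q by blast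
  then show c: "path_comp (a, es) \<in> cArr D" using valid_path_comp q by simp
  have "cDom D (path_comp (a, es)) = x" using valid_path_comp q x by simp
  then show "pi_class N (a, es) = nerve_arr (path_comp (a, es))"
    unfolding nerve_arr_def using canon_path[OF c] pi_class_valid q x by simp
qed

lemma nerve_arr_inj:
  assumes a: "a \<in> cArr D" and b: "b \<in> cArr D" and eq: "nerve_arr a = nerve_arr b"
  shows "a = b"
proof -
  have "([ie (cDom D b)], [canon_edge b]) \<in> nerve_arr a"
    unfolding eq unfolding nerve_arr_def using pi_class_valid canon_path[OF b] by simp
  then show ?thesis
    unfolding nerve_arr_def using pi_class_valid canon_path[OF a] canon_path[OF b] by simp
qed

lemma nerve_arr_comp:
  assumes f: "f \<in> cArr D" and g: "g \<in> cArr D" and fg: "cDom D g = cCod D f"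
  shows "cComp (Pi_cat N) (nerve_arr g) (nerve_arr f) = nerve_arr (cComp D g f)"
proof -
  note cf = canon_path[OF f] and cg = canon_path[OF g]
  have ends: "spath_end N [ie (cDom D f)] [canon_edge f] = [ie (cDom D g)]"
    using spath_end_path_comp[OF cf(1)] cf(2) fg by simp
  have valid: "valid_path N ([ie (cDom D f)], [canon_edge f] @ [canon_edge g])"
    using cf cg ends valid_path_append[of _ "[canon_edge f]" "[canon_edge g]"] by simp
  have "cComp (Pi_cat N) (nerve_arr g) (nerve_arr f) = pi_class N ([ie (cDom D f)], [canon_edge f] @ [canon_edge g])"
    unfolding nerve_arr_def using Pi_cat_comp[OF cf(1)] cg(1) ends by simp
  also have "\<dots> = nerve_arr (cComp D g f)"
    using pi_class_eq_nerve_arr(2)[OF valid] path_comp_append[OF valid] cf cg ends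
      cat_dom_obj[OF cat f] by simp
  finally show ?thesis .
qed

lemma is_functor_nerve_arr: "is_functor D (Pi_cat N) (\<lambda>x. [ie x]) nerve_arr"
  unfolding is_functor_def
proof (intro conjI ballI impI)
  fix f assume f: "f \<in> cArr D"
  show "nerve_arr f \<in> cArr (Pi_cat N)"
    unfolding nerve_arr_def Pi_cat_def using canon_path[OF f] by auto
  show "cDom (Pi_cat N) (nerve_arr f) = [ie (cDom D f)]"
    unfolding nerve_arr_def using Pi_cat_dom canon_path[OF f] by simp
  show "cCod (Pi_cat N) (nerve_arr f) = [ie (cCod D f)]"
    unfolding nerve_arr_def using Pi_cat_cod spath_end_path_comp canon_path[OF f] by simp
next
  fix x assume x: "x \<in> cObj D"
  have "valid_path N ([ie x], [])" unfolding valid_path_def vertex_iff using x by auto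
  then show "nerve_arr (cId D x) = cId (Pi_cat N) [ie x]"
    unfolding Pi_cat_def using pi_class_eq_nerve_arr(2) path_comp_Nil[OF x] by simp
next
  fix f g assume "f \<in> cArr D" "g \<in> cArr D" "cDom D g = cCod D f"
  then show "nerve_arr (cComp D g f) = cComp (Pi_cat N) (nerve_arr g) (nerve_arr f)"
    using nerve_arr_comp by simp
qed (auto simp: Pi_cat_def vertex_iff)

lemma arr_Pi_cat: "cArr (Pi_cat N) = nerve_arr ` cArr D"
proof
  show "nerve_arr ` cArr D \<subseteq> cArr (Pi_cat N)"
    unfolding nerve_arr_def Pi_cat_def using canon_path by auto
  show "cArr (Pi_cat N) \<subseteq> nerve_arr ` cArr D"
  proof
    fix c assume "c \<in> cArr (Pi_cat N)"
    then obtain a es where "valid_path N (a, es)" "c = pi_class N (a, es)"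
      unfolding Pi_cat_def by auto
    then show "c \<in> nerve_arr ` cArr D" using pi_class_eq_nerve_arr by blast
  qed
qed

theorem iso_functor_Pi_cat: "iso_functor D (Pi_cat N) (\<lambda>x. [ie x]) nerve_arr"
proof (rule iso_functor_if_bij[OF cat is_functor_nerve_arr])
  show "bij_betw (\<lambda>x. [ie x]) (cObj D) (cObj (Pi_cat N))"
    unfolding bij_betw_def inj_on_def Pi_cat_def using id_label_inj vertex_iff by auto
  show "bij_betw nerve_arr (cArr D) (cArr (Pi_cat N))"
    unfolding bij_betw_def inj_on_def arr_Pi_cat using nerve_arr_inj by auto
qed

end

section \<open>Simplicial maps and maps of labellings\<close>

lemma is_smapD:
  assumes "is_smap X Y g"
  shows smap_Simp: "x \<in> Simp X n \<Longrightarrow> g n x \<in> Simp Y n"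
    and smap_sact: "dmap m n \<theta> \<Longrightarrow> x \<in> Simp X n \<Longrightarrow> g m (sact X m n \<theta> x) = sact Y m n \<theta> (g n x)"
  using assms unfolding is_smap_def by blast+

lemma smap_faces:
  assumes "is_smap X Y g"
  shows "e \<in> Simp X 1 \<Longrightarrow> g 0 (ssrc X e) = ssrc Y (g 1 e)"
    and "e \<in> Simp X 1 \<Longrightarrow> g 0 (stgt X e) = stgt Y (g 1 e)"
    and "v \<in> Simp X 0 \<Longrightarrow> g 1 (sdegen0 X v) = sdegen0 Y (g 0 v)"
    and "s \<in> Simp X 2 \<Longrightarrow> g 1 (sface0 X s) = sface0 Y (g 2 s)"
    and "s \<in> Simp X 2 \<Longrightarrow> g 1 (sface1 X s) = sface1 Y (g 2 s)"
    and "s \<in> Simp X 2 \<Longrightarrow> g 1 (sface2 X s) = sface2 Y (g 2 s)"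
  unfolding ssrc_def stgt_def sdegen0_def sface0_def sface1_def sface2_def
  using dmap_faces_degeneracy[THEN smap_sact[OF assms]] by auto

definition smap_path :: "(nat \<Rightarrow> 'a \<Rightarrow> 'b) \<Rightarrow> 'a \<times> 'a list \<Rightarrow> 'b \<times> 'b list" where
  "smap_path g q = (g 0 (fst q), map (g 1) (snd q))"

lemma valid_path_smap_path:
  assumes g: "is_smap X Y g" and q: "valid_path X q"
  shows "valid_path Y (smap_path g q)"
proof -
  have "schain Y (g 0 a) (map (g 1) es)" if "set es \<subseteq> Simp X 1" "schain X a es" for a es
    using that
  proof (induction es arbitrary: a)
    case (Cons e es)
    then show ?case using Cons.IH[of "stgt X e"] smap_faces(1,2)[OF g, of e] by simp
  qed simp
  then show ?thesis
    using q smap_Simp[OF g] unfolding valid_path_def smap_path_def by auto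
qed

lemma pirel_smap_path:
  assumes g: "is_smap X Y g"
  shows "pirel X q r \<Longrightarrow> pirel Y (smap_path g q) (smap_path g r)"
proof (induction rule: pirel.induct)
  case (prefl q)
  then show ?case using valid_path_smap_path[OF g] pirel.prefl by blast
next
  case (pid v a us vs)
  have "pirel Y (g 0 a, map (g 1) us @ [sdegen0 Y (g 0 v)] @ map (g 1) vs) (g 0 a, map (g 1) us @ map (g 1) vs)"
    using pirel.pid[OF smap_Simp[OF g pid.hyps(1)]] valid_path_smap_path[OF g pid.hyps(2)]
      smap_faces(3)[OF g pid.hyps(1)] unfolding smap_path_def by simp
  then show ?case using smap_faces(3)[OF g pid.hyps(1)] unfolding smap_path_def by simp
next
  case (pcomp s a us vs)
  have "pirel Y (g 0 a, map (g 1) us @ [sface2 Y (g 2 s), sface0 Y (g 2 s)] @ map (g 1) vs)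
      (g 0 a, map (g 1) us @ [sface1 Y (g 2 s)] @ map (g 1) vs)"
    using pirel.pcomp[OF smap_Simp[OF g pcomp.hyps(1)]] valid_path_smap_path[OF g pcomp.hyps(2)]
      smap_faces(4,6)[OF g pcomp.hyps(1)] unfolding smap_path_def by simp
  then show ?case using smap_faces(4-6)[OF g pcomp.hyps(1)] unfolding smap_path_def by simp
qed (use pirel.psym pirel.ptrans in blast)+

lemma pi_class_eq: "pirel X q r \<Longrightarrow> pi_class X q = pi_class X r"
  unfolding pi_class_def by (auto intro: pirel.ptrans pirel.psym)

lemma Pi_arr_pi_class:
  assumes g: "is_smap X Y g" and q: "valid_path X q"
  shows "Pi_arr Y g (pi_class X q) = pi_class Y (smap_path g q)"
proof -
  have "q \<in> pi_class X q" unfolding pi_class_def using q by (simp add: pirel.prefl)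
  then have "(SOME r. r \<in> pi_class X q) \<in> pi_class X q" by (rule someI)
  then have "pirel Y (smap_path g q) (smap_path g (SOME r. r \<in> pi_class X q))"
    unfolding pi_class_def using pirel_smap_path[OF g] by simp
  then show ?thesis
    unfolding Pi_arr_def Let_def smap_path_def using pi_class_eq by metis
qed

locale labelling_map =
  src: arrow_labelling D E p ie + tgt: arrow_labelling D' E' p' ie'
  for D :: "('o, 'm) cat" and E :: "'e set" and p ie
    and D' :: "('o', 'm') cat" and E' :: "'e' set" and p' ie' +
  fixes Fo :: "'o \<Rightarrow> 'o'" and Fm :: "'m \<Rightarrow> 'm'" and h :: "'e \<Rightarrow> 'e'"
  assumes F: "is_functor D D' Fo Fm"
    and label_map_in: "e \<in> E \<Longrightarrow> h e \<in> E'"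
    and label_map_arr: "e \<in> E \<Longrightarrow> p' (h e) = Fm (p e)"
    and label_map_id: "x \<in> cObj D \<Longrightarrow> h (ie x) = ie' (Fo x)"
begin

lemma nerve_matrix_map:
  assumes M: "nerve_matrix D E p ie n M"
  shows "nerve_matrix D' E' p' ie' n (\<lambda>i j. h (M i j))"
proof -
  have arr: "p (M i j) \<in> cArr D" and lab: "p' (h (M i j)) = Fm (p (M i j))"
    if "i \<le> j" "j \<le> n" for i j
    using src.label_arr[OF nerve_matrix_in[OF M that]] label_map_arr[OF nerve_matrix_in[OF M that]] .
  show ?thesis
    unfolding nerve_matrix_def
  proof (intro conjI allI impI)
    fix i j assume "i \<le> j \<and> j \<le> n"
    then have ij: "i \<le> j" "j \<le> n" "i \<le> n" by auto
    then show "h (M i j) \<in> E'" using nerve_matrix_in[OF M] label_map_in by blast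
    show "cDom D' (p' (h (M i j))) = cDom D' (p' (h (M i i)))"
      using ij lab[of i j] lab[of i i] functor_dom[OF F arr[of i j]] functor_dom[OF F arr[of i i]]
        nerve_matrix_dom[OF M, of i j] by simp
    show "cCod D' (p' (h (M i j))) = cDom D' (p' (h (M j j)))"
      using ij lab[of i j] lab[of j j] functor_cod[OF F arr[of i j]] functor_dom[OF F arr[of j j]]
        nerve_matrix_cod[OF M, of i j] by simp
  next
    fix i assume "i \<le> n"
    then obtain x where "x \<in> cObj D" "M i i = ie x" using nerve_matrix_diag[OF M] by blast
    then show "\<exists>x\<in>cObj D'. h (M i i) = ie' x"
      using label_map_id functor_obj[OF F] by auto
  next
    fix i j k assume "i \<le> j \<and> j \<le> k \<and> k \<le> n"
    then have ijk: "i \<le> j" "j \<le> k" "k \<le> n" "j \<le> n" "i \<le> k" by auto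
    then have "cDom D (p (M j k)) = cCod D (p (M i j))"
      using nerve_matrix_dom[OF M, of j k] nerve_matrix_cod[OF M, of i j] by simp
    then show "cComp D' (p' (h (M j k))) (p' (h (M i j))) = p' (h (M i k))"
      using ijk lab[of i j] lab[of j k] lab[of i k] functor_comp[OF F arr[of i j] arr[of j k]]
        nerve_matrix_comp[OF M, of i j k] by simp
  qed
qed

lemma is_smap_map: "is_smap src.N tgt.N (\<lambda>_. map h)"
  unfolding is_smap_def
proof (intro conjI allI impI ballI)
  fix n l assume "l \<in> Simp src.N n"
  then obtain M where "nerve_matrix D E p ie n M" "l = upper_entries n M"
    unfolding Simp_labelled_nerve by blast
  then have "map h l = upper_entries n (\<lambda>i j. h (M i j))" "nerve_matrix D' E' p' ie' n (\<lambda>i j. h (M i j))"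
    using nerve_matrix_map by (simp_all add: map_upper_entries)
  then show "map h l \<in> Simp tgt.N n"
    unfolding Simp_labelled_nerve by blast
next
  fix m n \<theta> l assume "dmap m n \<theta>" "l \<in> Simp src.N n"
  then show "map h (sact src.N m n \<theta> l) = sact tgt.N m n \<theta> (map h l)"
    unfolding Simp_labelled_nerve by (auto simp: sact_labelled_nerve map_upper_entries)
qed

lemma is_smono_map:
  assumes inj: "inj_on h E"
  shows "is_smono src.N tgt.N (\<lambda>_. map h)"
proof -
  have labels: "set l \<subseteq> E" if l: "l \<in> Simp src.N n" for l n
  proof -
    obtain M where "nerve_matrix D E p ie n M" "l = upper_entries n M"
      using l unfolding Simp_labelled_nerve by blast
    then show ?thesis using nerve_matrix_in by (auto simp: set_upper_entries)
  qed
  have "inj_on (map h) (Simp src.N n)" for n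
  proof (rule inj_onI)
    fix l1 l2 assume l1: "l1 \<in> Simp src.N n" and l2: "l2 \<in> Simp src.N n" and eq: "map h l1 = map h l2"
    have "inj_on h (set l1 \<union> set l2)"
      by (rule inj_on_subset[OF inj]) (use labels[OF l1] labels[OF l2] in simp)
    then show "l1 = l2" using eq by (simp add: inj_on_map_eq_map)
  qed
  then show ?thesis unfolding is_smono_def using is_smap_map by blast
qed

lemma Pi_arr_nerve_arr:
  assumes a: "a \<in> cArr D"
  shows "Pi_arr tgt.N (\<lambda>_. map h) (src.nerve_arr a) = tgt.nerve_arr (Fm a)"
proof -
  note ca = src.canon_path[OF a] and lab = src.canon_label[OF a]
  have x: "Fo (cDom D a) \<in> cObj D'" "Fo (cCod D a) \<in> cObj D'"
    using functor_obj[OF F] cat_dom_obj[OF src.cat a] cat_cod_obj[OF src.cat a] by simp_all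
  define q where "q = smap_path (\<lambda>_. map h) ([ie (cDom D a)], [src.canon_edge a])"
  have q: "q = ([ie' (Fo (cDom D a))], [[ie' (Fo (cDom D a)), h (src.canon_label a), ie' (Fo (cCod D a))]])"
    unfolding q_def smap_path_def src.canon_edge_def
    using label_map_id cat_dom_obj[OF src.cat a] cat_cod_obj[OF src.cat a] by simp
  have ph: "p' (h (src.canon_label a)) = Fm a" using label_map_arr lab by simp
  have "tgt.path_comp q = cComp D' (cId D' (Fo (cCod D a))) (Fm a)"
    unfolding q using tgt.path_comp_Cons[OF x] tgt.path_comp_Nil[OF x(2)] ph functor_cod[OF F a] by simp
  also have "\<dots> = Fm a" using cat_id_left[OF tgt.cat functor_arr[OF F a]] functor_cod[OF F a] by simp
  finally have "tgt.path_comp q = Fm a" .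
  moreover have "valid_path tgt.N q" unfolding q_def using valid_path_smap_path[OF is_smap_map ca(1)] .
  ultimately have "pi_class tgt.N q = tgt.nerve_arr (Fm a)"
    using tgt.pi_class_eq_nerve_arr(2) q by simp
  then show ?thesis
    unfolding src.nerve_arr_def Pi_arr_pi_class[OF is_smap_map ca(1)] q_def .
qed

theorem arrow_iso_Pi_map:
  "arrow_iso D D' Fo Fm (Pi_cat src.N) (Pi_cat tgt.N) (Pi_obj (\<lambda>_. map h)) (Pi_arr tgt.N (\<lambda>_. map h))"
proof -
  have "Pi_obj (\<lambda>_. map h) [ie x] = [ie' (Fo x)]" if "x \<in> cObj D" for x
    unfolding Pi_obj_def using label_map_id[OF that] by simp
  then show ?thesis
    unfolding arrow_iso_def
    using src.iso_functor_Pi_cat tgt.iso_functor_Pi_cat Pi_arr_nerve_arr by blast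
qed

end

section \<open>Functors injective on objects\<close>

lemma inj_on_obj_if_arrow_iso_Pi_smono:
  assumes g: "is_smono X Y g"
    and iso: "arrow_iso A B fo fm (Pi_cat X) (Pi_cat Y) (Pi_obj g) (Pi_arr Y g)"
  shows "inj_on fo (cObj A)"
proof (rule inj_onI)
  obtain ao am bo bm where ao: "iso_functor A (Pi_cat X) ao am"
    and square: "\<forall>x\<in>cObj A. Pi_obj g (ao x) = bo (fo x)"
    using iso unfolding arrow_iso_def by blast
  obtain Go where Go: "\<forall>x\<in>cObj A. Go (ao x) = x"
    using ao unfolding iso_functor_def by blast
  have vertex: "ao x \<in> Simp X 0" if "x \<in> cObj A" for x
    using ao that unfolding iso_functor_def is_functor_def Pi_cat_def by auto
  fix x y assume x: "x \<in> cObj A" and y: "y \<in> cObj A" and eq: "fo x = fo y"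
  have "g 0 (ao x) = g 0 (ao y)" using square x y eq unfolding Pi_obj_def by metis
  then have "ao x = ao y"
    using g vertex[OF x] vertex[OF y] unfolding is_smono_def inj_on_def by blast
  then show "x = y" using Go x y by metis
qed

text \<open>Of the carrier type \<open>wit\<close> only the summands \<open>'am\<close> and \<open>'bm\<close> serve as labels.\<close>

definition A_label :: "'am \<Rightarrow> 'ao + 'bo + 'am + 'bm + nat" where
  "A_label a = Inr (Inr (Inl a))"

definition B_label :: "'bm \<Rightarrow> 'ao + 'bo + 'am + 'bm + nat" where
  "B_label b = Inr (Inr (Inr (Inl b)))"

definition A_arr :: "'ao + 'bo + 'am + 'bm + nat \<Rightarrow> 'am" where
  "A_arr e = (case e of Inr (Inr (Inl a)) \<Rightarrow> a | _ \<Rightarrow> undefined)"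

definition B_arr :: "('am \<Rightarrow> 'bm) \<Rightarrow> 'ao + 'bo + 'am + 'bm + nat \<Rightarrow> 'bm" where
  "B_arr fm e = (case e of Inr (Inr (Inl a)) \<Rightarrow> fm a | Inr (Inr (Inr (Inl b))) \<Rightarrow> b | _ \<Rightarrow> undefined)"

definition glue_ids ::
  "('ao, 'am) cat \<Rightarrow> ('bo, 'bm) cat \<Rightarrow> ('ao \<Rightarrow> 'bo) \<Rightarrow> 'ao + 'bo + 'am + 'bm + nat \<Rightarrow> 'ao + 'bo + 'am + 'bm + nat" where
  "glue_ids A B fo e = (case e of
     Inr (Inr (Inl a)) \<Rightarrow> if a = cId A (cDom A a) then B_label (cId B (fo (cDom A a))) else e
   | _ \<Rightarrow> e)"

lemma label_simps [simp]:
  "A_arr (A_label a) = a" "B_arr fm (A_label a) = fm a" "B_arr fm (B_label b) = b"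
  "glue_ids A B fo (A_label a) =
     (if a = cId A (cDom A a) then B_label (cId B (fo (cDom A a))) else A_label a)"
  "A_label a \<noteq> B_label b" "B_label b \<noteq> A_label a"
  "A_label a = A_label a' \<longleftrightarrow> a = a'" "B_label b = B_label b' \<longleftrightarrow> b = b'"
  unfolding A_label_def B_label_def A_arr_def B_arr_def glue_ids_def by auto

lemma labelling_map_glue_ids:
  assumes A: "is_category A" and B: "is_category B" and F: "is_functor A B fo fm"
  shows "labelling_map A (A_label ` cArr A) A_arr (\<lambda>x. A_label (cId A x))
           B (A_label ` cArr A \<union> B_label ` cArr B) (B_arr fm) (\<lambda>y. B_label (cId B y)) fo fm (glue_ids A B fo)"
proof -
  have glue_arr: "glue_ids A B fo (A_label a) \<in> A_label ` cArr A \<union> B_label ` cArr B \<and>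
      B_arr fm (glue_ids A B fo (A_label a)) = fm a" if a: "a \<in> cArr A" for a
  proof (cases "a = cId A (cDom A a)")
    case True
    then have "fm a = cId B (fo (cDom A a))" using functor_id[OF F cat_dom_obj[OF A a]] by metis
    then show ?thesis
      using True a cat_id_arr[OF B] functor_obj[OF F] cat_dom_obj[OF A] by auto
  qed (use a in auto)
  show ?thesis
  proof unfold_locales
    fix b assume "b \<in> cArr B"
    then show "\<exists>e\<in>A_label ` cArr A \<union> B_label ` cArr B. B_arr fm e = b" by force
  qed (use A B F glue_arr cat_dom_id[OF A] cat_id_arr[OF A] cat_id_arr[OF B] cat_dom_obj[OF A]
        functor_obj[OF F] functor_arr[OF F] in auto)
qed

lemma inj_on_glue_ids:
  assumes A: "is_category A" and B: "is_category B" and F: "is_functor A B fo fm"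
    and inj: "inj_on fo (cObj A)"
  shows "inj_on (glue_ids A B fo) (A_label ` cArr A)"
proof (rule inj_onI)
  fix e1 e2 assume "e1 \<in> A_label ` cArr A" "e2 \<in> A_label ` cArr A"
    and eq: "glue_ids A B fo e1 = glue_ids A B fo e2"
  then obtain a b where a: "a \<in> cArr A" "e1 = A_label a" and b: "b \<in> cArr A" "e2 = A_label b"
    by blast
  show "e1 = e2"
  proof (cases "a = cId A (cDom A a)"; cases "b = cId A (cDom A b)")
    assume ida: "a = cId A (cDom A a)" and idb: "b = cId A (cDom A b)"
    then have "cId B (fo (cDom A a)) = cId B (fo (cDom A b))" using eq a b by simp
    then have "fo (cDom A a) = fo (cDom A b)"
      using cat_dom_id[OF B] functor_obj[OF F] cat_dom_obj[OF A] a b by metis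
    then have "cDom A a = cDom A b" using inj cat_dom_obj[OF A] a b unfolding inj_on_def by blast
    then show ?thesis using ida idb a b by metis
  qed (use eq a b in auto)
qed

lemma ex_smono_arrow_iso_Pi_if_inj_on_obj:
  fixes A :: "('ao, 'am) cat" and B :: "('bo, 'bm) cat"
    and fo :: "'ao \<Rightarrow> 'bo" and fm :: "'am \<Rightarrow> 'bm"
  assumes A: "is_category A" and B: "is_category B" and F: "is_functor A B fo fm"
    and inj: "inj_on fo (cObj A)"
  shows "\<exists>(X :: ('ao, 'bo, 'am, 'bm) wit sset) (Y :: ('ao, 'bo, 'am, 'bm) wit sset) g.
           is_sset X \<and> is_sset Y \<and> is_smono X Y g \<and>
           arrow_iso A B fo fm (Pi_cat X) (Pi_cat Y) (Pi_obj g) (Pi_arr Y g)"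
proof -
  interpret labelling_map A "A_label ` cArr A" A_arr "\<lambda>x. A_label (cId A x)"
    B "A_label ` cArr A \<union> B_label ` cArr B" "B_arr fm" "\<lambda>y. B_label (cId B y)" fo fm "glue_ids A B fo"
    using labelling_map_glue_ids[OF A B F] .
  show ?thesis
    using is_sset_labelled_nerve[of A "A_label ` cArr A" A_arr "\<lambda>x. A_label (cId A x)"]
      is_sset_labelled_nerve[of B "A_label ` cArr A \<union> B_label ` cArr B" "B_arr fm" "\<lambda>y. B_label (cId B y)"]
      is_smono_map[OF inj_on_glue_ids[OF assms]] arrow_iso_Pi_map by blast
qed

theorem lemma2p4:
  fixes A :: "('ao, 'am) cat" and B :: "('bo, 'bm) cat"
    and fo :: "'ao \<Rightarrow> 'bo" and fm :: "'am \<Rightarrow> 'bm"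
  assumes "is_category A" and "is_category B" and "is_functor A B fo fm"
  shows "(inj_on fo (cObj A) \<longleftrightarrow>
           (\<exists>(X :: ('ao, 'bo, 'am, 'bm) wit sset) (Y :: ('ao, 'bo, 'am, 'bm) wit sset) g.
              is_sset X \<and> is_sset Y \<and> is_smono X Y g \<and>
              arrow_iso A B fo fm (Pi_cat X) (Pi_cat Y) (Pi_obj g) (Pi_arr Y g)))
         \<and> (\<forall>(X :: 'x sset) (Y :: 'y sset) g.
              is_sset X \<and> is_sset Y \<and> is_smono X Y g \<and>
              arrow_iso A B fo fm (Pi_cat X) (Pi_cat Y) (Pi_obj g) (Pi_arr Y g) \<longrightarrow>
              inj_on fo (cObj A))"
proof (intro conjI iffI allI impI)
  assume "inj_on fo (cObj A)"
  then show "\<exists>(X :: ('ao, 'bo, 'am, 'bm) wit sset) (Y :: ('ao, 'bo, 'am, 'bm) wit sset) g.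
      is_sset X \<and> is_sset Y \<and> is_smono X Y g \<and>
      arrow_iso A B fo fm (Pi_cat X) (Pi_cat Y) (Pi_obj g) (Pi_arr Y g)"
    by (rule ex_smono_arrow_iso_Pi_if_inj_on_obj[OF assms])
qed (use inj_on_obj_if_arrow_iso_Pi_smono in blast)+

end
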